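(* Let $\phi$ be an IPC formula disjunctive in the variable $x$ and let $n$ be the cardinality of $\mathrm{Head}(\phi)$. Then for every Heyting algebra $H$ and valuation $v$ of the variables other than $x$, the map $F(h)=[\![\phi]\!]_{(v,h/x)}$ satisfies $\mu.F=F^{n+1}(\bot)$.
   Context: A formula is disjunctive in $x$ if it is generated by the grammar $\phi ::= x \mid \alpha\to\phi \mid \beta\vee\phi \mid \phi\vee\phi$, where $\alpha,\beta$ range over IPC formulas not containing $x$ (disjunctions up to commutativity). $\mathrm{Head}(\phi)$ is the set of formulas $\alpha$ used in productions $\alpha\to\phi'$ in the parse of $\phi$. $\mu.F$ is the least fixed point of $F$. *)

theory Defs
  imports Main
begin

class heyting_algebra = bounded_lattice +
  fixes himp :: "'a \<Rightarrow> 'a \<Rightarrow> 'a" (infixr "\<leadsto>" 60)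
  assumes himp_residuation: "inf a b \<le> c \<longleftrightarrow> a \<le> (b \<leadsto> c)"

datatype 'v form =
    Var 'v
  | Bot
  | Top
  | Conj "'v form" "'v form"
  | Disj "'v form" "'v form"
  | Imp "'v form" "'v form"

fun vars :: "'v form \<Rightarrow> 'v set" where
  "vars (Var y) = {y}"
| "vars Bot = {}"
| "vars Top = {}"
| "vars (Conj a b) = vars a \<union> vars b"
| "vars (Disj a b) = vars a \<union> vars b"
| "vars (Imp a b) = vars a \<union> vars b"

fun eval :: "('v \<Rightarrow> 'a::heyting_algebra) \<Rightarrow> 'v form \<Rightarrow> 'a" where
  "eval v (Var y) = v y"
| "eval v Bot = bot"
| "eval v Top = top"
| "eval v (Conj a b) = inf (eval v a) (eval v b)"
| "eval v (Disj a b) = sup (eval v a) (eval v b)"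
| "eval v (Imp a b) = (eval v a \<leadsto> eval v b)"

text \<open>Grammar: phi ::= x | alpha -> phi | beta \/ phi | phi \/ phi, with alpha, beta
  not containing x; disjunctions taken up to commutativity.\<close>

inductive disjunctive :: "'v \<Rightarrow> 'v form \<Rightarrow> bool" for x where
  dvar: "disjunctive x (Var x)"
| dimp: "x \<notin> vars a \<Longrightarrow> disjunctive x p \<Longrightarrow> disjunctive x (Imp a p)"
| dorl: "x \<notin> vars b \<Longrightarrow> disjunctive x p \<Longrightarrow> disjunctive x (Disj b p)"
| dorr: "x \<notin> vars b \<Longrightarrow> disjunctive x p \<Longrightarrow> disjunctive x (Disj p b)"
| dor:  "disjunctive x p \<Longrightarrow> disjunctive x q \<Longrightarrow> disjunctive x (Disj p q)"

text \<open>A disjunct not containing x is a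
  side formula beta and contributes nothing.\<close>

fun head :: "'v \<Rightarrow> 'v form \<Rightarrow> 'v form set" where
  "head x (Imp a p) = insert a (head x p)"
| "head x (Disj p q) =
     (if x \<notin> vars p then head x q
      else if x \<notin> vars q then head x p
      else head x p \<union> head x q)"
| "head x _ = {}"

definition is_least_fixpoint :: "('a::order \<Rightarrow> 'a) \<Rightarrow> 'a \<Rightarrow> bool" where
  "is_least_fixpoint F a \<longleftrightarrow> F a = a \<and> (\<forall>b. F b = b \<longrightarrow> a \<le> b)"

end

theory Submission
  imports Defs
begin

(* Write F p h for the value of p with x set to h. For p disjunctive in x, F p is monotone,
   inflationary and satisfies  d \<sqinter> F p h \<le> F p (d \<sqinter> h).  Along the Kleene chain
   h_k = (F p)^k \<bottom>  one shows  c \<sqinter> h_(k+1) \<le> h_k  as soon as k exceeds the number of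
   heads \<alpha> with \<not> c \<le> [\<alpha>]: at an implication \<alpha> \<rightarrow> \<psi>, either c \<le> [\<alpha>] and the
   implication is transparent below c, or one passes to c \<sqinter> [\<alpha>], which has one such head
   fewer. For c = \<top> the chain is therefore stationary after |Head(\<phi>)| + 1 steps. *)

context heyting_algebra
begin

lemma inf_himp_le: "inf (a \<leadsto> b) a \<le> b"
  using himp_residuation[of "a \<leadsto> b" a b] by simp

lemma le_himp: "b \<le> a \<leadsto> b"
  using himp_residuation[of b a b] by simp

lemma himp_mono: "b \<le> c \<Longrightarrow> a \<leadsto> b \<le> a \<leadsto> c"
  using himp_residuation[of "a \<leadsto> b" a c] inf_himp_le[of a b] by (meson order_trans)

lemma inf_sup_le_sup_inf: "inf c (sup a b) \<le> sup (inf c a) (inf c b)"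
proof -
  let ?r = "sup (inf c a) (inf c b)"
  have "a \<le> c \<leadsto> ?r" "b \<le> c \<leadsto> ?r"
    using himp_residuation[of a c ?r] himp_residuation[of b c ?r]
    by (simp_all add: inf_commute le_supI1 le_supI2)
  then have "inf (sup a b) c \<le> ?r"
    using himp_residuation by simp
  then show ?thesis
    by (simp add: inf_commute)
qed

end

subclass (in heyting_algebra) distrib_lattice
proof
  have inf_sup: "inf x (sup y z) = sup (inf x y) (inf x z)" for x y z
    by (rule order.antisym[OF inf_sup_le_sup_inf]) (simp add: le_infI2 inf_mono)
  show "sup x (inf y z) = inf (sup x y) (sup x z)" for x y z
    by (rule distrib_imp1[OF inf_sup])
qed

lemma eval_fun_upd_notin_vars: "x \<notin> vars a \<Longrightarrow> eval (v(x := h)) a = eval v a"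
  by (induction a) auto

lemma disjunctive_var_in_vars: "disjunctive x p \<Longrightarrow> x \<in> vars p"
  by (induction rule: disjunctive.induct) auto

lemma finite_head: "finite (head x p)"
  by (induction x p rule: head.induct) auto

lemma disjunctive_mono:
  fixes v :: "'v \<Rightarrow> 'a::heyting_algebra"
  assumes "disjunctive x p"
  shows "mono (\<lambda>h. eval (v(x := h)) p)"
proof
  fix h h' :: 'a
  assume "h \<le> h'"
  with assms show "eval (v(x := h)) p \<le> eval (v(x := h')) p"
    by (induction rule: disjunctive.induct)
      (auto simp: eval_fun_upd_notin_vars himp_mono le_supI1 le_supI2)
qed

lemma disjunctive_inflationary:
  fixes v :: "'v \<Rightarrow> 'a::heyting_algebra"
  shows "disjunctive x p \<Longrightarrow> h \<le> eval (v(x := h)) p"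
  by (induction rule: disjunctive.induct)
    (auto simp: eval_fun_upd_notin_vars le_supI1 le_supI2 intro: order_trans[OF _ le_himp])

lemma disjunctive_inf_le:
  fixes v :: "'v \<Rightarrow> 'a::heyting_algebra"
  shows "disjunctive x p \<Longrightarrow> inf d (eval (v(x := h)) p) \<le> eval (v(x := inf d h)) p"
proof (induction rule: disjunctive.induct)
  case (dimp a p)
  let ?A = "eval v a"
  have "inf (inf d (?A \<leadsto> eval (v(x := h)) p)) ?A \<le> inf d (eval (v(x := h)) p)"
    using inf_himp_le[of ?A "eval (v(x := h)) p"] by (simp add: le_infI1 le_infI2 inf_assoc)
  also have "\<dots> \<le> eval (v(x := inf d h)) p"
    by (rule dimp.IH)
  finally have "inf d (?A \<leadsto> eval (v(x := h)) p) \<le> ?A \<leadsto> eval (v(x := inf d h)) p"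
    using himp_residuation by blast
  then show ?case
    by (simp only: eval.simps eval_fun_upd_notin_vars[OF dimp.hyps(1)])
qed (auto simp: eval_fun_upd_notin_vars inf_sup_distrib1 le_supI1 le_supI2 fun_upd_same
    simp del: fun_upd_apply)

lemma disjunctive_inf_prefixpoint:
  fixes v :: "'v \<Rightarrow> 'a::heyting_algebra"
  shows "disjunctive x p \<Longrightarrow>
    \<forall>\<alpha>\<in>head x p. c \<le> eval v \<alpha> \<or> inf (inf c (eval v \<alpha>)) h' \<le> h \<Longrightarrow>
    eval (v(x := h)) p \<le> h' \<Longrightarrow> inf c (eval (v(x := h')) p) \<le> h'"
proof (induction rule: disjunctive.induct)
  case (dimp a p)
  let ?A = "eval v a" and ?P = "\<lambda>h. eval (v(x := h)) p"
  have antecedent: "eval (v(x := h)) a = ?A" for h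
    using dimp.hyps(1) by (rule eval_fun_upd_notin_vars)
  have imp_le: "?A \<leadsto> ?P h \<le> h'"
    using dimp.prems(2) by (simp only: eval.simps antecedent)
  have "inf c (?A \<leadsto> ?P h') \<le> h'"
  proof (cases "c \<le> ?A")
    case True
    have "inf c (?A \<leadsto> ?P h') \<le> inf (?A \<leadsto> ?P h') ?A"
      using True by (simp add: le_infI1)
    also have "\<dots> \<le> ?P h'"
      by (rule inf_himp_le)
    finally have "inf c (?A \<leadsto> ?P h') \<le> inf c (?P h')"
      by simp
    also have "\<dots> \<le> h'"
    proof (rule dimp.IH)
      show "\<forall>\<alpha>\<in>head x p. c \<le> eval v \<alpha> \<or> inf (inf c (eval v \<alpha>)) h' \<le> h"
        using dimp.prems(1) by simp
      show "?P h \<le> h'"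
        using le_himp imp_le by (rule order_trans)
    qed
    finally show ?thesis .
  next
    case False
    then have below: "inf (inf c ?A) h' \<le> h"
      using dimp.prems(1) by simp
    have "inf (inf c (?A \<leadsto> ?P h')) ?A \<le> inf (inf c ?A) (?P h')"
      using order_trans[OF inf_mono[OF inf_le2 order_refl] inf_himp_le] by (simp add: le_infI1)
    also have "\<dots> \<le> ?P (inf (inf c ?A) h')"
      using dimp.hyps(2) by (rule disjunctive_inf_le)
    also have "\<dots> \<le> ?P h"
      using disjunctive_mono[OF dimp.hyps(2)] below by (rule monoD)
    finally have "inf c (?A \<leadsto> ?P h') \<le> ?A \<leadsto> ?P h"
      using himp_residuation by blast
    then show ?thesis
      using imp_le by (rule order_trans)
  qed
  then show ?case
    by (simp only: eval.simps antecedent)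
next
  case (dor p q)
  then show ?case
    using disjunctive_var_in_vars[OF dor.hyps(1)] disjunctive_var_in_vars[OF dor.hyps(2)]
    by (simp add: inf_sup_distrib1)
qed (auto simp: eval_fun_upd_notin_vars inf_sup_distrib1 disjunctive_var_in_vars le_infI2
    fun_upd_same simp del: fun_upd_apply)

lemma disjunctive_iterate_inf_le:
  fixes v :: "'v \<Rightarrow> 'a::heyting_algebra"
  assumes "disjunctive x p"
    and "card {\<alpha> \<in> head x p. \<not> c \<le> eval v \<alpha>} < k"
  shows "inf c (((\<lambda>h. eval (v(x := h)) p) ^^ Suc k) bot)
           \<le> ((\<lambda>h. eval (v(x := h)) p) ^^ k) bot"
  using assms(2)
proof (induction k arbitrary: c)
  case 0
  then show ?case by simp
next
  case (Suc k)
  let ?F = "\<lambda>h. eval (v(x := h)) p" and ?bad = "\<lambda>c. {\<alpha> \<in> head x p. \<not> c \<le> eval v \<alpha>}"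
  have "inf (inf c (eval v \<alpha>)) ((?F ^^ Suc k) bot) \<le> (?F ^^ k) bot"
    if "\<alpha> \<in> ?bad c" for \<alpha>
  proof (rule Suc.IH)
    have "?bad (inf c (eval v \<alpha>)) \<subseteq> ?bad c - {\<alpha>}"
      by (auto intro: le_infI1)
    then have "card (?bad (inf c (eval v \<alpha>))) \<le> card (?bad c - {\<alpha>})"
      by (rule card_mono[rotated]) (simp add: finite_head)
    also have "\<dots> < card (?bad c)"
      using that by (intro card_Diff1_less) (simp_all add: finite_head)
    finally have "card (?bad (inf c (eval v \<alpha>))) < card (?bad c)" .
    then show "card (?bad (inf c (eval v \<alpha>))) < k"
      using Suc.prems by simp
  qed
  then have "inf c (?F ((?F ^^ Suc k) bot)) \<le> (?F ^^ Suc k) bot"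
    by (intro disjunctive_inf_prefixpoint[OF assms(1)]) auto
  then show ?case
    by (simp only: funpow.simps(2) comp_apply)
qed

lemma funpow_bot_le_fixpoint:
  fixes F :: "'a::order_bot \<Rightarrow> 'a"
  assumes "mono F" and "F b = b"
  shows "(F ^^ n) bot \<le> b"
proof (induction n)
  case (Suc n)
  have "F ((F ^^ n) bot) \<le> F b"
    using assms(1) Suc by (rule monoD)
  then show ?case
    using assms(2) by simp
qed simp

lemma is_least_fixpoint_funpow_bot:
  fixes F :: "'a::order_bot \<Rightarrow> 'a"
  assumes "mono F" and "F ((F ^^ n) bot) = (F ^^ n) bot"
  shows "is_least_fixpoint F ((F ^^ n) bot)"
  using assms funpow_bot_le_fixpoint unfolding is_least_fixpoint_def by blast

theorem mainTheorem20:
  fixes x :: 'v and \<phi> :: "'v form" and v :: "'v \<Rightarrow> 'a::heyting_algebra"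
  assumes "disjunctive x \<phi>"
  shows "is_least_fixpoint (\<lambda>h. eval (v(x := h)) \<phi>)
           (((\<lambda>h. eval (v(x := h)) \<phi>) ^^ (card (head x \<phi>) + 1)) bot)"
proof -
  let ?F = "\<lambda>h. eval (v(x := h)) \<phi>" and ?n = "card (head x \<phi>) + 1"
  have "card {\<alpha> \<in> head x \<phi>. \<not> top \<le> eval v \<alpha>} \<le> card (head x \<phi>)"
    by (rule card_mono[OF finite_head]) blast
  then have "inf top ((?F ^^ Suc ?n) bot) \<le> (?F ^^ ?n) bot"
    by (intro disjunctive_iterate_inf_le[OF assms]) simp
  then have "?F ((?F ^^ ?n) bot) \<le> (?F ^^ ?n) bot"
    by (simp only: inf_top_left funpow.simps(2) comp_apply)
  moreover have "(?F ^^ ?n) bot \<le> ?F ((?F ^^ ?n) bot)"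
    using assms by (rule disjunctive_inflationary)
  ultimately show ?thesis
    using disjunctive_mono[OF assms] by (intro is_least_fixpoint_funpow_bot) auto
qed

end
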